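(* For any planar weighted graph $(G,x)$ and any set of dual edges $\varkappa\subset E(G^* )$, $$\sum_{P\in\mathcal E(G)}(-1)^{\varkappa\cdot P}x(P)=(-1)^{|\varkappa|}\sum_{D\in\mathcal D(G^K)}(-1)^{t(D)}(-1)^{\varkappa\cdot D}x^K(D).$$
   Context: Let $G$ be a finite connected graph embedded in the plane, with edge weights $x=(x_e)$. Let $\vec E(G)$ be the set of oriented edges, with origin $o(e)$ and reversal $\bar e$. $\mathcal E(G)$ is the set of even subgraphs and $x(P)=\prod_{e\in P}x_e$. $G^*$ is the planar dual and $e^*$ the dual of $e$. Terminal graph $G^K$. Its vertex set is $\vec E(G)$. It has long edges $\{e,\bar e\}$ of weight $1$, and short edges $\{e,e'\}$ of weight $(x_ex_{e'})^{1/2}$ for each pair $e\ne e'$ with $o(e)=o(e')$. $\mathcal D(G^K)$ is the set of its perfect matchings and $x^K(D)$ the product of the weights of the edges of $D$. $t(D)$ is the number of pairs of short edges of $D$ at the same vertex $v$ whose endpoints interlace in the cyclic order around $v$. Intersection counts. $|\varkappa|$ is the number of edges in $\varkappa$. $\varkappa\cdot P$ is the number of $e\in P$ with $e^*\in\varkappa$. $\varkappa\cdot D$ is the number of long edges $\{e,\bar e\}\in D$ whose underlying edge of $G$ has its dual in $\varkappa$. *)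

theory Defs
  imports Complex_Main
begin

text \<open>A planar embedded graph is encoded as a combinatorial map (rotation system):
  a finite set H of darts (oriented edges), the reversal involution alpha
  (e to e-bar) and the rotation sigma, giving the cyclic (counterclockwise) order
  of the darts around their common origin.\<close>

definition orb :: "('d \<Rightarrow> 'd) \<Rightarrow> 'd \<Rightarrow> 'd set" where
  "orb f d = {(f ^^ n) d | n. True}"

definition origin :: "('d \<Rightarrow> 'd) \<Rightarrow> 'd \<Rightarrow> 'd set" where
  "origin \<sigma> d = orb \<sigma> d"

definition edge_of :: "('d \<Rightarrow> 'd) \<Rightarrow> 'd \<Rightarrow> 'd set" where
  "edge_of \<alpha> d = {d, \<alpha> d}"

definition map_edges :: "'d set \<Rightarrow> ('d \<Rightarrow> 'd) \<Rightarrow> 'd set set" where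
  "map_edges H \<alpha> = edge_of \<alpha> ` H"

definition map_verts :: "'d set \<Rightarrow> ('d \<Rightarrow> 'd) \<Rightarrow> 'd set set" where
  "map_verts H \<sigma> = origin \<sigma> ` H"

definition map_faces :: "'d set \<Rightarrow> ('d \<Rightarrow> 'd) \<Rightarrow> ('d \<Rightarrow> 'd) \<Rightarrow> 'd set set" where
  "map_faces H \<alpha> \<sigma> = orb (\<sigma> \<circ> \<alpha>) ` H"

definition comb_map :: "'d set \<Rightarrow> ('d \<Rightarrow> 'd) \<Rightarrow> ('d \<Rightarrow> 'd) \<Rightarrow> bool" where
  "comb_map H \<alpha> \<sigma> \<longleftrightarrow> finite H \<and> H \<noteq> {} \<and>
     (\<forall>d\<in>H. \<alpha> d \<in> H \<and> \<alpha> (\<alpha> d) = d \<and> \<alpha> d \<noteq> d) \<and> bij_betw \<sigma> H H"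

definition connected_map :: "'d set \<Rightarrow> ('d \<Rightarrow> 'd) \<Rightarrow> ('d \<Rightarrow> 'd) \<Rightarrow> bool" where
  "connected_map H \<alpha> \<sigma> \<longleftrightarrow>
     (\<forall>d\<in>H. \<forall>d'\<in>H. (\<lambda>a b. b = \<alpha> a \<or> b = \<sigma> a)\<^sup>*\<^sup>* d d')"

definition planar_map :: "'d set \<Rightarrow> ('d \<Rightarrow> 'd) \<Rightarrow> ('d \<Rightarrow> 'd) \<Rightarrow> bool" where
  "planar_map H \<alpha> \<sigma> \<longleftrightarrow> comb_map H \<alpha> \<sigma> \<and> connected_map H \<alpha> \<sigma> \<and>
     int (card (map_verts H \<sigma>)) - int (card (map_edges H \<alpha>))
       + int (card (map_faces H \<alpha> \<sigma>)) = 2"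

text \<open>Dual map: same darts and reversal, rotation sigma o alpha (faces become vertices).
  The dual edge e* of e = {d, alpha d} is the alpha-orbit {d, alpha d} of the dual map,
  i.e. the same set of darts.\<close>
definition dual_rot :: "('d \<Rightarrow> 'd) \<Rightarrow> ('d \<Rightarrow> 'd) \<Rightarrow> ('d \<Rightarrow> 'd)" where
  "dual_rot \<alpha> \<sigma> = \<sigma> \<circ> \<alpha>"

definition dual_edges :: "'d set \<Rightarrow> ('d \<Rightarrow> 'd) \<Rightarrow> ('d \<Rightarrow> 'd) \<Rightarrow> 'd set set" where
  "dual_edges H \<alpha> \<sigma> = map_edges H \<alpha>"

definition dual_edge :: "'d set \<Rightarrow> 'd set" where
  "dual_edge e = e"

text \<open>Even subgraphs: sets of edges with even degree at each vertex (loops count twice).\<close>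
definition even_subgraphs :: "'d set \<Rightarrow> ('d \<Rightarrow> 'd) \<Rightarrow> ('d \<Rightarrow> 'd) \<Rightarrow> 'd set set set" where
  "even_subgraphs H \<alpha> \<sigma> = {P. P \<subseteq> map_edges H \<alpha> \<and>
     (\<forall>v\<in>map_verts H \<sigma>. even (card {d\<in>v. edge_of \<alpha> d \<in> P}))}"

text \<open>Terminal graph G^K: vertex set H; edges tagged True (long) or False (short),
  so that it may be a multigraph.\<close>
definition K_edges :: "'d set \<Rightarrow> ('d \<Rightarrow> 'd) \<Rightarrow> ('d \<Rightarrow> 'd) \<Rightarrow> ('d set \<times> bool) set" where
  "K_edges H \<alpha> \<sigma> = {(edge_of \<alpha> d, True) | d. d \<in> H} \<union>
     {({a, b}, False) | a b. a \<in> H \<and> b \<in> H \<and> a \<noteq> b \<and> origin \<sigma> a = origin \<sigma> b}"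

definition K_weight :: "('d \<Rightarrow> 'd) \<Rightarrow> ('d set \<Rightarrow> real) \<Rightarrow> 'd set \<times> bool \<Rightarrow> real" where
  "K_weight \<alpha> x k = (if snd k then 1 else sqrt (\<Prod>d\<in>fst k. x (edge_of \<alpha> d)))"

definition K_matchings :: "'d set \<Rightarrow> ('d \<Rightarrow> 'd) \<Rightarrow> ('d \<Rightarrow> 'd) \<Rightarrow> ('d set \<times> bool) set set" where
  "K_matchings H \<alpha> \<sigma> = {D. D \<subseteq> K_edges H \<alpha> \<sigma> \<and> (\<forall>d\<in>H. \<exists>!k. k \<in> D \<and> d \<in> fst k)}"

text \<open>Cyclic order around a vertex: c lies strictly between a and b when turning
  from a (in the rotation direction) towards b.\<close>
definition rot_pos :: "('d \<Rightarrow> 'd) \<Rightarrow> 'd \<Rightarrow> 'd \<Rightarrow> nat" where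
  "rot_pos \<sigma> a c = (LEAST k. (\<sigma> ^^ k) a = c)"

definition cbetween :: "('d \<Rightarrow> 'd) \<Rightarrow> 'd \<Rightarrow> 'd \<Rightarrow> 'd \<Rightarrow> bool" where
  "cbetween \<sigma> a b c \<longleftrightarrow> 0 < rot_pos \<sigma> a c \<and> rot_pos \<sigma> a c < rot_pos \<sigma> a b"

definition interlace :: "('d \<Rightarrow> 'd) \<Rightarrow> 'd set \<Rightarrow> 'd set \<Rightarrow> bool" where
  "interlace \<sigma> S T \<longleftrightarrow> (\<exists>a b c d. S = {a, b} \<and> T = {c, d} \<and>
     cbetween \<sigma> a b c \<noteq> cbetween \<sigma> a b d)"

definition t_count :: "('d \<Rightarrow> 'd) \<Rightarrow> ('d set \<times> bool) set \<Rightarrow> nat" where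
  "t_count \<sigma> D = card {{k1, k2} | k1 k2. k1 \<in> D \<and> k2 \<in> D \<and> k1 \<noteq> k2 \<and>
     \<not> snd k1 \<and> \<not> snd k2 \<and>
     (\<exists>v. fst k1 \<union> fst k2 \<subseteq> origin \<sigma> v) \<and> interlace \<sigma> (fst k1) (fst k2)}"

definition kappa_dot_P :: "'d set set \<Rightarrow> 'd set set \<Rightarrow> nat" where
  "kappa_dot_P \<kappa> P = card {e \<in> P. dual_edge e \<in> \<kappa>}"

definition kappa_dot_D :: "'d set set \<Rightarrow> ('d set \<times> bool) set \<Rightarrow> nat" where
  "kappa_dot_D \<kappa> D = card {k \<in> D. snd k \<and> dual_edge (fst k) \<in> \<kappa>}"

end

theory Submission
  imports Defs
begin

text \<open>A perfect matching D of the terminal graph consists of a set L of long edges and a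
  perfect matching M, by short edges, of the darts not covered by L. Long edges never cross, so
  the sign of D is that of M. Removing the chord of M at a dart a, with other end b, changes
  the number of crossings by the number of remaining darts strictly between a and b, modulo 2.
  Summing the resulting alternating signs over the choices of b shows that the signed count
  of the short matchings is 1 if every vertex keeps an even number of darts, and 0 otherwise.
  So the surviving L are the complements of the even subgraphs P; then the short darts carry
  the weight x(P), and kappa.D = |L \<inter> kappa| has the parity of |kappa| + |P \<inter> kappa|.\<close>

lemma real_sqrt_prod: "sqrt (prod f A) = (\<Prod>a\<in>A. sqrt (f a))"
  by (induction A rule: infinite_finite_induct) (auto simp: real_sqrt_mult)

lemma minus_one_power_card_Diff:
  assumes "finite K"
  shows "(-1::'a::comm_ring_1) ^ card K * (-1) ^ card (K - P) = (-1) ^ card (K \<inter> P)"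
proof -
  have "card K = card (K - P) + card (K \<inter> P)"
    using card_Int_Diff[OF assms, of P] by simp
  then have "(-1::'a) ^ card K * (-1) ^ card (K - P)
      = ((-1) ^ card (K - P) * (-1) ^ card (K - P)) * (-1) ^ card (K \<inter> P)"
    by (simp add: power_add mult_ac)
  also have "(-1::'a) ^ card (K - P) * (-1) ^ card (K - P) = 1"
    by (simp flip: power_mult_distrib)
  finally show ?thesis by simp
qed

definition related_pairs :: "('k \<Rightarrow> 'k \<Rightarrow> bool) \<Rightarrow> 'k set \<Rightarrow> 'k set set" where
  "related_pairs C M = {{k1, k2} | k1 k2. k1 \<in> M \<and> k2 \<in> M \<and> k1 \<noteq> k2 \<and> C k1 k2}"

lemma finite_related_pairs: "finite M \<Longrightarrow> finite (related_pairs C M)"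
  by (rule finite_subset[of _ "Pow M"]) (auto simp: related_pairs_def)

lemma related_pairs_Un_unrelated:
  assumes "\<And>k k'. k \<in> A \<Longrightarrow> \<not> C k k' \<and> \<not> C k' k"
  shows "related_pairs C (A \<union> M) = related_pairs C M"
  unfolding related_pairs_def using assms by blast

lemma card_related_pairs_insert:
  assumes M: "finite M" and k: "k \<notin> M"
  shows "card (related_pairs C (insert k M))
    = card (related_pairs C M) + card {k' \<in> M. C k k' \<or> C k' k}"
proof -
  let ?N = "{k' \<in> M. C k k' \<or> C k' k}"
  have split: "related_pairs C (insert k M) = related_pairs C M \<union> (\<lambda>k'. {k, k'}) ` ?N"
  proof (intro equalityI subsetI)
    fix p assume "p \<in> related_pairs C (insert k M)"
    then obtain k1 k2 where "p = {k1, k2}" "k1 \<in> insert k M" "k2 \<in> insert k M" "k1 \<noteq> k2" "C k1 k2"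
      unfolding related_pairs_def by blast
    then show "p \<in> related_pairs C M \<union> (\<lambda>k'. {k, k'}) ` ?N"
      unfolding related_pairs_def by (cases "k1 = k"; cases "k2 = k") (auto simp: insert_commute)
  next
    fix p assume "p \<in> related_pairs C M \<union> (\<lambda>k'. {k, k'}) ` ?N"
    moreover have "{k, k'} \<in> related_pairs C (insert k M)" if "k' \<in> ?N" for k'
      using that k unfolding related_pairs_def by (auto intro: insert_commute)
    moreover have "related_pairs C M \<subseteq> related_pairs C (insert k M)"
      unfolding related_pairs_def by blast
    ultimately show "p \<in> related_pairs C (insert k M)" by blast
  qed
  have "related_pairs C M \<inter> (\<lambda>k'. {k, k'}) ` ?N = {}"
    using k unfolding related_pairs_def by (auto simp: doubleton_eq_iff)
  moreover have "inj_on (\<lambda>k'. {k, k'}) ?N"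
    using k by (auto simp: inj_on_def doubleton_eq_iff)
  ultimately show ?thesis
    unfolding split using M by (simp add: card_Un_disjoint finite_related_pairs card_image)
qed

lemma sum_alternating_rank:
  fixes S :: "'a::linorder set"
  assumes "finite S"
  shows "(\<Sum>j\<in>S. (-1::'b::ring_1) ^ card {i \<in> S. i < j}) = (if odd (card S) then 1 else 0)"
  using assms
proof (induction rule: finite_linorder_max_induct)
  case (insert b A)
  have "b \<notin> A" using insert.hyps by blast
  moreover have "{i \<in> insert b A. i < b} = A" using insert.hyps by auto
  moreover have "{i \<in> insert b A. i < j} = {i \<in> A. i < j}" if "j \<in> A" for j
    using insert.hyps that by auto
  ultimately show ?case using insert by simp
qed simp

lemma sum_alternating_rank_inj_on:
  fixes f :: "'c \<Rightarrow> 'a::linorder"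
  assumes S: "finite S" and f: "inj_on f S"
  shows "(\<Sum>j\<in>S. (-1::'b::ring_1) ^ card {i \<in> S. f i < f j}) = (if odd (card S) then 1 else 0)"
proof -
  have "card {i \<in> S. f i < f j} = card {y \<in> f ` S. y < f j}" for j
  proof -
    have "{y \<in> f ` S. y < f j} = f ` {i \<in> S. f i < f j}" by auto
    then show ?thesis using inj_on_subset[OF f] by (simp add: card_image)
  qed
  then have "(\<Sum>j\<in>S. (-1::'b) ^ card {i \<in> S. f i < f j})
      = (\<Sum>y\<in>f ` S. (-1) ^ card {z \<in> f ` S. z < y})"
    by (simp add: sum.reindex[OF f])
  also have "\<dots> = (if odd (card S) then 1 else 0)"
    using sum_alternating_rank[of "f ` S"] S card_image[OF f] by simp
  finally show ?thesis .
qed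

section \<open>Perfect matchings by blocks\<close>

text \<open>A candidate k from A covers the set blk k; for the terminal graph the candidates are
  the tagged edges and blk is the first projection.\<close>
definition perfect_matchings :: "('k \<Rightarrow> 'd set) \<Rightarrow> 'k set \<Rightarrow> 'd set \<Rightarrow> 'k set set" where
  "perfect_matchings blk A R =
    {M. M \<subseteq> A \<and> (\<forall>k\<in>M. blk k \<subseteq> R) \<and> (\<forall>d\<in>R. \<exists>!k. k \<in> M \<and> d \<in> blk k)}"

context
  fixes blk :: "'k \<Rightarrow> 'd set" and A :: "'k set"
begin

lemma perfect_matchingI:
  assumes "M \<subseteq> A" "\<And>k. k \<in> M \<Longrightarrow> blk k \<subseteq> R" "\<And>d. d \<in> R \<Longrightarrow> \<exists>k\<in>M. d \<in> blk k"
    and "\<And>k k' d. k \<in> M \<Longrightarrow> k' \<in> M \<Longrightarrow> d \<in> blk k \<Longrightarrow> d \<in> blk k' \<Longrightarrow> k = k'"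
  shows "M \<in> perfect_matchings blk A R"
  unfolding perfect_matchings_def
proof (intro CollectI conjI ballI ex_ex1I)
  fix d assume "d \<in> R"
  then show "\<exists>k. k \<in> M \<and> d \<in> blk k" using assms(3) by blast
qed (use assms in blast)+

lemma perfect_matchingD:
  assumes "M \<in> perfect_matchings blk A R"
  shows perfect_matching_subset: "M \<subseteq> A"
    and perfect_matching_block_subset: "k \<in> M \<Longrightarrow> blk k \<subseteq> R"
    and perfect_matching_covers: "d \<in> R \<Longrightarrow> \<exists>k\<in>M. d \<in> blk k"
    and perfect_matching_unique:
      "k \<in> M \<Longrightarrow> k' \<in> M \<Longrightarrow> d \<in> blk k \<Longrightarrow> d \<in> blk k' \<Longrightarrow> k = k'"
proof -
  have M: "M \<subseteq> A" "\<forall>k\<in>M. blk k \<subseteq> R" "\<forall>d\<in>R. \<exists>!k. k \<in> M \<and> d \<in> blk k"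
    using assms unfolding perfect_matchings_def by auto
  show "M \<subseteq> A" by (fact M(1))
  show "k \<in> M \<Longrightarrow> blk k \<subseteq> R" using M(2) by blast
  show "d \<in> R \<Longrightarrow> \<exists>k\<in>M. d \<in> blk k" using M(3) by blast
  assume "k \<in> M" "k' \<in> M" "d \<in> blk k" "d \<in> blk k'"
  moreover from this have "\<exists>!k. k \<in> M \<and> d \<in> blk k" using M(2,3) by blast
  ultimately show "k = k'" by blast
qed

lemma finite_perfect_matchings: "finite A \<Longrightarrow> finite (perfect_matchings blk A R)"
  by (rule finite_subset[of _ "Pow A"]) (auto dest: perfect_matching_subset)

lemma perfect_matchings_empty:
  assumes "\<forall>k\<in>A. blk k \<noteq> {}"
  shows "perfect_matchings blk A {} = {{}}"
proof
  show "perfect_matchings blk A {} \<subseteq> {{}}"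
  proof
    fix M assume M: "M \<in> perfect_matchings blk A {}"
    then have "blk k = {}" "k \<in> A" if "k \<in> M" for k
      using that perfect_matching_block_subset[OF M] perfect_matching_subset[OF M] by auto
    then show "M \<in> {{}}" using assms by blast
  qed
  show "{{}} \<subseteq> perfect_matchings blk A {}" by (auto intro: perfect_matchingI)
qed

lemma perfect_matching_disjoint:
  assumes "M \<in> perfect_matchings blk A R" "k \<in> M" "k' \<in> M" "k \<noteq> k'"
  shows "blk k \<inter> blk k' = {}"
  using assms perfect_matching_unique[OF assms(1)] by blast

lemma UN_perfect_matching:
  assumes "M \<in> perfect_matchings blk A R"
  shows "(\<Union>k\<in>M. blk k) = R"
proof
  show "(\<Union>k\<in>M. blk k) \<subseteq> R" using perfect_matching_block_subset[OF assms] by blast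
  show "R \<subseteq> (\<Union>k\<in>M. blk k)" using perfect_matching_covers[OF assms] by blast
qed

lemma card_eq_sum_blocks:
  assumes M: "M \<in> perfect_matchings blk A R" "finite M" and fin: "\<forall>k\<in>M. finite (blk k)"
    and S: "S \<subseteq> R"
  shows "card S = (\<Sum>k\<in>M. card (blk k \<inter> S))"
proof -
  have "S = (\<Union>k\<in>M. blk k \<inter> S)" using UN_perfect_matching[OF M(1)] S by blast
  also have "card \<dots> = (\<Sum>k\<in>M. card (blk k \<inter> S))"
    using M fin perfect_matching_disjoint[OF M(1)] by (intro card_UN_disjoint) auto
  finally show ?thesis .
qed

lemma insert_perfect_matching:
  assumes k: "k \<in> A" "blk k \<subseteq> R" and M: "M \<in> perfect_matchings blk A (R - blk k)"
  shows "insert k M \<in> perfect_matchings blk A R"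
proof (rule perfect_matchingI)
  show "insert k M \<subseteq> A" using k perfect_matching_subset[OF M] by blast
  show "blk k' \<subseteq> R" if "k' \<in> insert k M" for k'
    using that k perfect_matching_block_subset[OF M] by blast
  show "\<exists>k'\<in>insert k M. d \<in> blk k'" if "d \<in> R" for d
    using that perfect_matching_covers[OF M] by blast
  show "k1 = k2" if "k1 \<in> insert k M" "k2 \<in> insert k M" "d \<in> blk k1" "d \<in> blk k2" for k1 k2 d
  proof -
    have "d \<notin> blk k'" if "k' \<in> M" "d \<in> blk k" for k'
      using that perfect_matching_block_subset[OF M] by blast
    then show ?thesis using that perfect_matching_unique[OF M] by blast
  qed
qed

lemma remove_perfect_matching:
  assumes M: "M \<in> perfect_matchings blk A R" and k: "k \<in> M"
  shows "M - {k} \<in> perfect_matchings blk A (R - blk k)"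
proof (rule perfect_matchingI)
  show "M - {k} \<subseteq> A" using perfect_matching_subset[OF M] by blast
  show "blk k' \<subseteq> R - blk k" if "k' \<in> M - {k}" for k'
    using that k perfect_matching_block_subset[OF M] perfect_matching_disjoint[OF M] by blast
  show "\<exists>k'\<in>M - {k}. d \<in> blk k'" if "d \<in> R - blk k" for d
    using that perfect_matching_covers[OF M] by blast
  show "k1 = k2" if "k1 \<in> M - {k}" "k2 \<in> M - {k}" "d \<in> blk k1" "d \<in> blk k2" for k1 k2 d
    using that perfect_matching_unique[OF M] by blast
qed

lemma perfect_matchings_eq_UN_insert:
  assumes a: "a \<in> R"
  shows "perfect_matchings blk A R =
    (\<Union>k\<in>{k \<in> A. a \<in> blk k \<and> blk k \<subseteq> R}. insert k ` perfect_matchings blk A (R - blk k))"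
    (is "_ = (\<Union>k\<in>?K. ?ins k)")
proof
  show "perfect_matchings blk A R \<subseteq> (\<Union>k\<in>?K. ?ins k)"
  proof
    fix M assume M: "M \<in> perfect_matchings blk A R"
    then obtain k where k: "k \<in> M" "a \<in> blk k" using a perfect_matching_covers[OF M] by blast
    then have "k \<in> ?K" "M = insert k (M - {k})"
      using perfect_matching_subset[OF M] perfect_matching_block_subset[OF M] by blast+
    then show "M \<in> (\<Union>k\<in>?K. ?ins k)" using remove_perfect_matching[OF M k(1)] by blast
  qed
  show "(\<Union>k\<in>?K. ?ins k) \<subseteq> perfect_matchings blk A R"
  proof
    fix M assume "M \<in> (\<Union>k\<in>?K. ?ins k)"
    then obtain k M' where "k \<in> ?K" "M' \<in> perfect_matchings blk A (R - blk k)" "M = insert k M'"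
      by blast
    then show "M \<in> perfect_matchings blk A R" using insert_perfect_matching by blast
  qed
qed

lemma sum_perfect_matchings_split:
  assumes A: "finite A" "\<forall>k\<in>A. blk k \<noteq> {}" and a: "a \<in> R"
  shows "(\<Sum>M\<in>perfect_matchings blk A R. f M)
    = (\<Sum>k\<in>{k \<in> A. a \<in> blk k \<and> blk k \<subseteq> R}. \<Sum>M\<in>perfect_matchings blk A (R - blk k). f (insert k M))"
proof -
  let ?K = "{k \<in> A. a \<in> blk k \<and> blk k \<subseteq> R}"
  let ?ins = "\<lambda>k. insert k ` perfect_matchings blk A (R - blk k)"
  note split = perfect_matchings_eq_UN_insert[OF a]
  have disjoint: "?ins k \<inter> ?ins k' = {}" if k: "k \<in> ?K" "k' \<in> ?K" "k \<noteq> k'" for k k'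
  proof (rule ccontr)
    assume "?ins k \<inter> ?ins k' \<noteq> {}"
    then obtain M where M: "M \<in> ?ins k" "M \<in> ?ins k'" by blast
    then have "k \<in> M" "k' \<in> M" by auto
    moreover have "M \<in> perfect_matchings blk A R" using split M(1) k(1) by blast
    ultimately have "k = k'" using k(1,2) perfect_matching_unique by blast
    then show False using k(3) by contradiction
  qed
  have inj: "inj_on (insert k) (perfect_matchings blk A (R - blk k))" if "k \<in> ?K" for k
  proof -
    have "k \<notin> M" if "M \<in> perfect_matchings blk A (R - blk k)" for M
      using A(2) \<open>k \<in> ?K\<close> perfect_matching_block_subset[OF that] by blast
    then show ?thesis by (meson inj_onI insert_ident)
  qed
  have "(\<Sum>M\<in>perfect_matchings blk A R. f M) = (\<Sum>k\<in>?K. \<Sum>M\<in>?ins k. f M)"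
    unfolding split using A(1) disjoint finite_perfect_matchings[OF A(1)]
    by (intro sum.UNION_disjoint) auto
  also have "\<dots> = (\<Sum>k\<in>?K. \<Sum>M\<in>perfect_matchings blk A (R - blk k). f (insert k M))"
  proof (rule sum.cong[OF refl])
    fix k assume "k \<in> ?K"
    show "(\<Sum>M\<in>?ins k. f M) = (\<Sum>M\<in>perfect_matchings blk A (R - blk k). f (insert k M))"
      using sum.reindex[OF inj[OF \<open>k \<in> ?K\<close>], of f] by simp
  qed
  finally show ?thesis .
qed

end

section \<open>Orbits of the rotation\<close>

lemma orb_self: "d \<in> orb f d"
  unfolding orb_def by (auto intro: exI[of _ 0])

locale rotation =
  fixes H :: "'d set" and \<sigma> :: "'d \<Rightarrow> 'd"
  assumes finite_darts: "finite H" and bij_rotation: "bij_betw \<sigma> H H"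
begin

lemma funpow_in_darts: "d \<in> H \<Longrightarrow> (\<sigma> ^^ n) d \<in> H"
  using bij_betw_funpow[OF bij_rotation, of n] by (auto simp: bij_betw_def)

lemma funpow_returns:
  assumes d: "d \<in> H"
  shows "\<exists>n>0. (\<sigma> ^^ n) d = d"
proof -
  have "\<not> inj_on (\<lambda>k. (\<sigma> ^^ k) d) {..card H}"
  proof
    assume "inj_on (\<lambda>k. (\<sigma> ^^ k) d) {..card H}"
    moreover have "(\<lambda>k. (\<sigma> ^^ k) d) ` {..card H} \<subseteq> H" using funpow_in_darts d by auto
    ultimately have "card {..card H} \<le> card H" using card_inj_on_le finite_darts by blast
    then show False by simp
  qed
  then obtain i j where ij: "i < j" "(\<sigma> ^^ i) d = (\<sigma> ^^ j) d"
    by (auto simp: inj_on_def) (metis linorder_neqE_nat)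
  have inj: "inj_on (\<sigma> ^^ i) H"
    using bij_betw_funpow[OF bij_rotation, of i] by (auto simp: bij_betw_def)
  have "(\<sigma> ^^ j) d = (\<sigma> ^^ i) ((\<sigma> ^^ (j - i)) d)"
    using ij by (metis funpow_add le_add_diff_inverse less_imp_le_nat o_apply)
  then have "(\<sigma> ^^ (j - i)) d = d" using inj ij d funpow_in_darts by (metis inj_on_def)
  then show ?thesis using ij by (intro exI[of _ "j - i"]) auto
qed

definition period :: "'d \<Rightarrow> nat" where
  "period d = (LEAST n. 0 < n \<and> (\<sigma> ^^ n) d = d)"

lemma period:
  assumes "d \<in> H"
  shows period_pos: "0 < period d" and funpow_period: "(\<sigma> ^^ period d) d = d"
    and funpow_less_period: "\<And>m. 0 < m \<Longrightarrow> m < period d \<Longrightarrow> (\<sigma> ^^ m) d \<noteq> d"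
proof -
  obtain n where "0 < n \<and> (\<sigma> ^^ n) d = d" using funpow_returns assms by blast
  then have "0 < period d \<and> (\<sigma> ^^ period d) d = d" unfolding period_def by (rule LeastI)
  then show "0 < period d" "(\<sigma> ^^ period d) d = d" by auto
  show "\<And>m. 0 < m \<Longrightarrow> m < period d \<Longrightarrow> (\<sigma> ^^ m) d \<noteq> d"
    unfolding period_def using not_less_Least by blast
qed

lemma funpow_period_mult: "d \<in> H \<Longrightarrow> (\<sigma> ^^ (period d * q)) d = d"
  by (induction q) (auto simp: funpow_add funpow_period simp del: funpow.simps)

lemma funpow_mod_period:
  assumes "d \<in> H"
  shows "(\<sigma> ^^ m) d = (\<sigma> ^^ (m mod period d)) d"
proof -
  have "(\<sigma> ^^ m) d = (\<sigma> ^^ (m mod period d)) ((\<sigma> ^^ (period d * (m div period d))) d)"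
    by (metis funpow_add o_apply mod_mult_div_eq)
  then show ?thesis using funpow_period_mult assms by simp
qed

lemma inj_on_funpow_period: "d \<in> H \<Longrightarrow> inj_on (\<lambda>k. (\<sigma> ^^ k) d) {0..<period d}"
  by (rule inj_on_funpow_least) (use period in auto)

lemma orb_eq_funpow_image:
  assumes "d \<in> H"
  shows "orb \<sigma> d = (\<lambda>k. (\<sigma> ^^ k) d) ` {0..<period d}"
proof -
  have "(\<sigma> ^^ n) d \<in> (\<lambda>k. (\<sigma> ^^ k) d) ` {0..<period d}" for n
    using funpow_mod_period[OF assms, of n] period_pos[OF assms] by auto
  then show ?thesis unfolding orb_def by auto
qed

lemma card_orb: "d \<in> H \<Longrightarrow> card (orb \<sigma> d) = period d"
  using orb_eq_funpow_image inj_on_funpow_period by (simp add: card_image)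

lemma orb_subset: "d \<in> H \<Longrightarrow> orb \<sigma> d \<subseteq> H"
  using funpow_in_darts by (auto simp: orb_def)

lemma orb_eq_if_mem:
  assumes d: "d \<in> H" and c: "c \<in> orb \<sigma> d"
  shows "orb \<sigma> c = orb \<sigma> d"
proof -
  obtain k where k: "(\<sigma> ^^ k) d = c" using c unfolding orb_def by auto
  have "(\<sigma> ^^ n) c \<in> orb \<sigma> d" for n
    using k unfolding orb_def by (auto intro!: exI[of _ "n + k"] simp: funpow_add)
  moreover have "(\<sigma> ^^ n) d \<in> orb \<sigma> c" for n
  proof -
    have "k \<le> period d * k" using period_pos[OF d] by simp
    then have "(\<sigma> ^^ (n + period d * k - k)) c = (\<sigma> ^^ (n + period d * k)) d"
      using k by (metis funpow_add o_apply le_add2 le_trans le_add_diff_inverse2)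
    also have "\<dots> = (\<sigma> ^^ n) d" using funpow_period_mult[OF d, of k] by (simp add: funpow_add)
    finally show ?thesis unfolding orb_def by (auto intro: exI[of _ "n + period d * k - k"])
  qed
  ultimately show ?thesis unfolding orb_def by blast
qed

lemma rot_pos_eqI:
  assumes "d \<in> H" "k < period d" "(\<sigma> ^^ k) d = c"
  shows "rot_pos \<sigma> d c = k"
  unfolding rot_pos_def
proof (rule Least_equality)
  fix j assume "(\<sigma> ^^ j) d = c"
  then have "(\<sigma> ^^ (j mod period d)) d = (\<sigma> ^^ k) d" using funpow_mod_period assms by metis
  then have "j mod period d = k"
    using inj_on_funpow_period[OF assms(1)] assms period_pos[OF assms(1)] by (auto simp: inj_on_def)
  then show "k \<le> j" by (metis mod_less_eq_dividend)
qed fact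

lemma rot_pos:
  assumes "d \<in> H" "c \<in> orb \<sigma> d"
  shows rot_pos_less_period: "rot_pos \<sigma> d c < period d"
    and funpow_rot_pos: "(\<sigma> ^^ rot_pos \<sigma> d c) d = c"
proof -
  obtain k where "k < period d" "(\<sigma> ^^ k) d = c" using assms orb_eq_funpow_image by auto
  then show "rot_pos \<sigma> d c < period d" "(\<sigma> ^^ rot_pos \<sigma> d c) d = c"
    using rot_pos_eqI assms by auto
qed

lemma inj_on_rot_pos: "d \<in> H \<Longrightarrow> inj_on (rot_pos \<sigma> d) (orb \<sigma> d)"
  using funpow_rot_pos by (metis inj_onI)

lemma rot_pos_self: "d \<in> H \<Longrightarrow> rot_pos \<sigma> d d = 0"
  using rot_pos_eqI period_pos by auto

lemma rot_pos_rebase: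
  assumes a: "a \<in> H" and b: "b \<in> orb \<sigma> a" and c: "c \<in> orb \<sigma> a"
  shows "rot_pos \<sigma> b c = (rot_pos \<sigma> a c + period a - rot_pos \<sigma> a b) mod period a"
proof -
  let ?k = "(rot_pos \<sigma> a c + period a - rot_pos \<sigma> a b) mod period a"
  have bH: "b \<in> H" using orb_subset a b by auto
  have "period b = period a" using card_orb orb_eq_if_mem[OF a b] a bH by metis
  then have lt: "?k < period b" using period_pos[OF a] by simp
  have "(?k + rot_pos \<sigma> a b) mod period a = (rot_pos \<sigma> a c + period a) mod period a"
    using rot_pos_less_period[OF a b] by (simp add: mod_add_left_eq)
  also have "\<dots> = rot_pos \<sigma> a c" using rot_pos_less_period[OF a c] by simp
  finally have "(\<sigma> ^^ ?k) b = c"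
    using funpow_rot_pos[OF a b] funpow_rot_pos[OF a c] funpow_mod_period[OF a]
    by (metis funpow_add o_apply)
  then show ?thesis using rot_pos_eqI[OF bH lt] by simp
qed

end

section \<open>Cyclic order around a vertex\<close>

definition cyc_between :: "nat \<Rightarrow> nat \<Rightarrow> nat \<Rightarrow> bool" where
  "cyc_between i k j \<longleftrightarrow> (i < k \<and> k < j) \<or> (k < j \<and> j < i) \<or> (j < i \<and> i < k)"

definition cyc_separates :: "nat \<Rightarrow> nat \<Rightarrow> nat \<Rightarrow> nat \<Rightarrow> bool" where
  "cyc_separates i j k l \<longleftrightarrow> cyc_between i k j \<noteq> cyc_between i l j"

lemma cyc_separates_swap:
  "distinct [i, j, k, l] \<Longrightarrow> cyc_separates j i k l \<longleftrightarrow> cyc_separates i j k l"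
  unfolding cyc_separates_def cyc_between_def
  by (cases "i < j"; cases "i < k"; cases "i < l"; cases "j < k"; cases "j < l"; cases "k < l") auto

lemma cyc_separates_commute:
  "distinct [i, j, k, l] \<Longrightarrow> cyc_separates k l i j \<longleftrightarrow> cyc_separates i j k l"
  unfolding cyc_separates_def cyc_between_def
  by (cases "i < j"; cases "i < k"; cases "i < l"; cases "j < k"; cases "j < l"; cases "k < l") auto

lemma add_diff_mod_eq:
  assumes "(i::nat) < n" "k < n"
  shows "(k + n - i) mod n = (if i \<le> k then k - i else k + n - i)"
proof (cases "i \<le> k")
  case True
  then have "k + n - i = (k - i) + n" by arith
  then have "(k + n - i) mod n = (k - i + n) mod n" by (simp only:)
  also have "\<dots> = k - i" using assms by simp
  finally show ?thesis using True by simp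
qed (use assms in auto)

lemma shifted_between_iff_cyc_between:
  "(i::nat) < n \<Longrightarrow> j < n \<Longrightarrow> k < n \<Longrightarrow> distinct [i, j, k] \<Longrightarrow>
   (0 < (k + n - i) mod n \<and> (k + n - i) mod n < (j + n - i) mod n) \<longleftrightarrow> cyc_between i k j"
  by (cases "i < j"; cases "i < k"; cases "j < k") (auto simp: add_diff_mod_eq cyc_between_def)

context rotation
begin

lemma cbetween_iff_cyc_between:
  assumes a: "a \<in> H" and xyz: "x \<in> orb \<sigma> a" "y \<in> orb \<sigma> a" "z \<in> orb \<sigma> a"
    and "distinct [x, y, z]"
  shows "cbetween \<sigma> x y z \<longleftrightarrow> cyc_between (rot_pos \<sigma> a x) (rot_pos \<sigma> a z) (rot_pos \<sigma> a y)"
proof -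
  have "distinct [rot_pos \<sigma> a x, rot_pos \<sigma> a y, rot_pos \<sigma> a z]"
    using inj_on_rot_pos[OF a] xyz assms(5) by (auto simp: inj_on_def)
  then show ?thesis
    unfolding cbetween_def rot_pos_rebase[OF a xyz(1,3)] rot_pos_rebase[OF a xyz(1,2)]
    using rot_pos_less_period[OF a] xyz by (intro shifted_between_iff_cyc_between) auto
qed

lemma interlace_iff_cyc_separates:
  assumes a: "a \<in> H" and xyzw: "x \<in> orb \<sigma> a" "y \<in> orb \<sigma> a" "z \<in> orb \<sigma> a" "w \<in> orb \<sigma> a"
    and d: "distinct [x, y, z, w]"
  shows "interlace \<sigma> {x, y} {z, w} \<longleftrightarrow>
    cyc_separates (rot_pos \<sigma> a x) (rot_pos \<sigma> a y) (rot_pos \<sigma> a z) (rot_pos \<sigma> a w)"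
proof -
  let ?p = "rot_pos \<sigma> a"
  have dd: "distinct [?p x, ?p y, ?p z, ?p w]"
    using inj_on_rot_pos[OF a] xyzw d by (auto simp: inj_on_def)
  have between: "cbetween \<sigma> p q r \<longleftrightarrow> cyc_between (?p p) (?p r) (?p q)"
    if "p \<in> {x, y, z, w}" "q \<in> {x, y, z, w}" "r \<in> {x, y, z, w}" "distinct [p, q, r]" for p q r
    using cbetween_iff_cyc_between[OF a] xyzw that by blast
  show ?thesis
  proof
    assume "interlace \<sigma> {x, y} {z, w}"
    then obtain p q r s where "{x, y} = {p, q}" "{z, w} = {r, s}"
      and "cbetween \<sigma> p q r \<noteq> cbetween \<sigma> p q s"
      unfolding interlace_def by blast
    then show "cyc_separates (?p x) (?p y) (?p z) (?p w)"
      using between d cyc_separates_swap[OF dd] unfolding doubleton_eq_iff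
      by (elim disjE conjE) (auto simp: cyc_separates_def)
  next
    assume "cyc_separates (?p x) (?p y) (?p z) (?p w)"
    then have "cbetween \<sigma> x y z \<noteq> cbetween \<sigma> x y w"
      using between d by (auto simp: cyc_separates_def)
    then show "interlace \<sigma> {x, y} {z, w}" unfolding interlace_def by blast
  qed
qed

lemma interlace_commute:
  assumes a: "a \<in> H" and xyzw: "x \<in> orb \<sigma> a" "y \<in> orb \<sigma> a" "z \<in> orb \<sigma> a" "w \<in> orb \<sigma> a"
    and d: "distinct [x, y, z, w]"
  shows "interlace \<sigma> {z, w} {x, y} \<longleftrightarrow> interlace \<sigma> {x, y} {z, w}"
proof -
  have "distinct [rot_pos \<sigma> a x, rot_pos \<sigma> a y, rot_pos \<sigma> a z, rot_pos \<sigma> a w]"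
    using inj_on_rot_pos[OF a] xyzw d by (auto simp: inj_on_def)
  moreover have "distinct [z, w, x, y]" using d by auto
  ultimately show ?thesis
    unfolding interlace_iff_cyc_separates[OF a xyzw d]
      interlace_iff_cyc_separates[OF a xyzw(3,4,1,2) \<open>distinct [z, w, x, y]\<close>]
    by (simp add: cyc_separates_commute)
qed

lemma interlace_chord_iff:
  assumes a: "a \<in> H" and bzw: "b \<in> orb \<sigma> a" "z \<in> orb \<sigma> a" "w \<in> orb \<sigma> a"
    and d: "distinct [a, b, z, w]"
  shows "interlace \<sigma> {a, b} {z, w} \<longleftrightarrow>
    (rot_pos \<sigma> a z < rot_pos \<sigma> a b) \<noteq> (rot_pos \<sigma> a w < rot_pos \<sigma> a b)"
proof -
  have "distinct [rot_pos \<sigma> a a, rot_pos \<sigma> a b, rot_pos \<sigma> a z, rot_pos \<sigma> a w]"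
    using inj_on_rot_pos[OF a] bzw d orb_self[of a \<sigma>] by (auto simp: inj_on_def)
  then show ?thesis
    unfolding interlace_iff_cyc_separates[OF a orb_self bzw d] cyc_separates_def
      cyc_between_def rot_pos_self[OF a]
    by auto
qed

end

section \<open>Signed count of chord diagrams\<close>

definition crossing :: "('d \<Rightarrow> 'd) \<Rightarrow> 'd set \<times> bool \<Rightarrow> 'd set \<times> bool \<Rightarrow> bool" where
  "crossing \<sigma> k1 k2 \<longleftrightarrow> \<not> snd k1 \<and> \<not> snd k2 \<and>
     (\<exists>v. fst k1 \<union> fst k2 \<subseteq> origin \<sigma> v) \<and> interlace \<sigma> (fst k1) (fst k2)"

lemma t_count_eq_card_crossing_pairs: "t_count \<sigma> D = card (related_pairs (crossing \<sigma>) D)"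
  unfolding t_count_def related_pairs_def crossing_def by (simp add: conj_assoc)

context rotation
begin

definition short_edges :: "('d set \<times> bool) set" where
  "short_edges = {({a, b}, False) | a b. a \<in> H \<and> b \<in> H \<and> a \<noteq> b \<and> origin \<sigma> a = origin \<sigma> b}"

abbreviation short_matchings :: "'d set \<Rightarrow> ('d set \<times> bool) set set" where
  "short_matchings \<equiv> perfect_matchings fst short_edges"

definition even_at_vertices :: "'d set \<Rightarrow> bool" where
  "even_at_vertices R \<longleftrightarrow> (\<forall>v\<in>map_verts H \<sigma>. even (card (R \<inter> v)))"

lemma finite_short_edges: "finite short_edges"
proof -
  have "short_edges \<subseteq> (\<lambda>(a, b). ({a, b}, False)) ` (H \<times> H)" unfolding short_edges_def by auto
  then show ?thesis using finite_darts finite_subset by blast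
qed

lemma origin_eq_iff_mem_orb: "a \<in> H \<Longrightarrow> b \<in> H \<Longrightarrow> origin \<sigma> a = origin \<sigma> b \<longleftrightarrow> b \<in> orb \<sigma> a"
  unfolding origin_def using orb_eq_if_mem orb_self by metis

lemma mem_orb_if_common_orb:
  assumes "a \<in> H" "c \<in> H" "a \<in> orb \<sigma> v" "c \<in> orb \<sigma> v"
  shows "c \<in> orb \<sigma> a"
proof -
  obtain k j where k: "a = (\<sigma> ^^ k) v" and j: "c = (\<sigma> ^^ j) v"
    using assms unfolding orb_def by auto
  show ?thesis
  proof (cases "k \<le> j")
    case True
    then have "c = (\<sigma> ^^ (j - k)) a" using k j by (metis funpow_add le_add_diff_inverse2 o_apply)
    then show ?thesis unfolding orb_def by auto
  next
    case False
    then have "a = (\<sigma> ^^ (k - j)) c" using k j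
      by (metis funpow_add le_add_diff_inverse2 o_apply nat_le_linear)
    then have "a \<in> orb \<sigma> c" unfolding orb_def by auto
    then show ?thesis using orb_eq_if_mem assms orb_self by metis
  qed
qed

lemma snd_short_edge: "k \<in> short_edges \<Longrightarrow> \<not> snd k"
  unfolding short_edges_def by auto

lemma short_matching_not_long: "M \<in> short_matchings R \<Longrightarrow> k \<in> M \<Longrightarrow> \<not> snd k"
  using perfect_matching_subset snd_short_edge by blast

lemma long_edge_notin_short_matching: "M \<in> short_matchings R \<Longrightarrow> (e, True) \<notin> M"
  using short_matching_not_long by fastforce

lemma short_edge_blocks_nonempty: "\<forall>k\<in>short_edges. fst k \<noteq> {}"
  unfolding short_edges_def by auto

lemma short_matching_edgeE:
  assumes "M \<in> short_matchings R" "k \<in> M"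
  obtains c d where "k = ({c, d}, False)" "c \<in> H" "d \<in> H" "c \<noteq> d" "d \<in> orb \<sigma> c" "c \<in> R" "d \<in> R"
proof -
  have "k \<in> short_edges" "fst k \<subseteq> R"
    using assms perfect_matching_subset[OF assms(1)] perfect_matching_block_subset[OF assms(1)] by blast+
  then show ?thesis using that origin_eq_iff_mem_orb unfolding short_edges_def by auto
qed

lemma short_edges_at:
  assumes R: "R \<subseteq> H" and a: "a \<in> R"
  shows "{k \<in> short_edges. a \<in> fst k \<and> fst k \<subseteq> R} = (\<lambda>b. ({a, b}, False)) ` (R \<inter> orb \<sigma> a - {a})"
proof -
  have aH: "a \<in> H" using R a by blast
  have "({a, b}, False) \<in> short_edges" if "b \<in> R \<inter> orb \<sigma> a - {a}" for b
    using that aH R origin_eq_iff_mem_orb unfolding short_edges_def by blast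
  moreover have "k \<in> (\<lambda>b. ({a, b}, False)) ` (R \<inter> orb \<sigma> a - {a})"
    if k: "k \<in> short_edges" "a \<in> fst k" "fst k \<subseteq> R" for k
  proof -
    obtain c d where cd: "k = ({c, d}, False)" "c \<in> H" "d \<in> H" "c \<noteq> d" "origin \<sigma> c = origin \<sigma> d"
      using k(1) unfolding short_edges_def by blast
    then have "k = ({a, if a = c then d else c}, False)" using k(2) by auto
    moreover have "(if a = c then d else c) \<in> orb \<sigma> a"
      using cd k(2) aH origin_eq_iff_mem_orb[of c d] origin_eq_iff_mem_orb[of d c] by auto
    ultimately show ?thesis using k(3) cd by (auto intro!: image_eqI)
  qed
  ultimately show ?thesis using a by auto
qed

lemma even_card_vertex_remove_chord:
  assumes "R \<subseteq> H" "a \<in> R" "b \<in> R" "b \<in> orb \<sigma> a" "b \<noteq> a" "v \<in> map_verts H \<sigma>"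
  shows "even (card ((R - {a, b}) \<inter> v)) \<longleftrightarrow> even (card (R \<inter> v))"
proof -
  obtain d where d: "d \<in> H" "v = orb \<sigma> d"
    using assms(6) unfolding map_verts_def origin_def by blast
  have aH: "a \<in> H" using assms by blast
  have fin: "finite (R \<inter> v)" using finite_darts assms(1) finite_subset by blast
  have eq: "(R - {a, b}) \<inter> v = R \<inter> v - {a, b}" by blast
  show ?thesis
  proof (cases "a \<in> v")
    case True
    then have "orb \<sigma> a = v" using d orb_eq_if_mem by blast
    then have sub: "{a, b} \<subseteq> R \<inter> v" using assms(2-4) orb_self by auto
    then have "card (R \<inter> v - {a, b}) + 2 = card (R \<inter> v)"
      using card_Diff_subset[OF _ sub] card_mono[OF fin sub] fin assms(5) by simp
    then show ?thesis unfolding eq by presburger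
  next
    case False
    have "b \<notin> v"
    proof
      assume "b \<in> v"
      then have "orb \<sigma> b = v" using d orb_eq_if_mem by blast
      then have "a \<in> v" using orb_eq_if_mem[OF aH assms(4)] orb_self[of a \<sigma>] by simp
      then show False using False by contradiction
    qed
    then have "R \<inter> v - {a, b} = R \<inter> v" using False by blast
    then show ?thesis unfolding eq by simp
  qed
qed

lemma even_at_vertices_remove_chord:
  "R \<subseteq> H \<Longrightarrow> a \<in> R \<Longrightarrow> b \<in> R \<Longrightarrow> b \<in> orb \<sigma> a \<Longrightarrow> b \<noteq> a \<Longrightarrow>
    even_at_vertices (R - {a, b}) \<longleftrightarrow> even_at_vertices R"
  unfolding even_at_vertices_def using even_card_vertex_remove_chord by simp


lemma crossing_chord_iff:
  assumes R: "R \<subseteq> H" and a: "a \<in> R" and b: "b \<in> orb \<sigma> a" "b \<noteq> a"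
    and M: "M \<in> short_matchings (R - {a, b})" and k: "k \<in> M"
  shows "(crossing \<sigma> ({a, b}, False) k \<or> crossing \<sigma> k ({a, b}, False)) \<longleftrightarrow>
    card (fst k \<inter> {c \<in> R \<inter> orb \<sigma> a - {a}. rot_pos \<sigma> a c < rot_pos \<sigma> a b}) = 1"
proof -
  let ?A = "{c \<in> R \<inter> orb \<sigma> a - {a}. rot_pos \<sigma> a c < rot_pos \<sigma> a b}"
  have aH: "a \<in> H" using a R by blast
  obtain c d where cd: "k = ({c, d}, False)" "c \<in> H" "d \<in> H" "c \<noteq> d" "d \<in> orb \<sigma> c"
    "c \<in> R - {a, b}" "d \<in> R - {a, b}"
    using M k by (elim short_matching_edgeE)
  show ?thesis
  proof (cases "c \<in> orb \<sigma> a")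
    case True
    then have d: "d \<in> orb \<sigma> a" using cd orb_eq_if_mem aH by blast
    have dist: "distinct [a, b, c, d]" using cd b by auto
    have "\<exists>v. {a, b} \<union> {c, d} \<subseteq> origin \<sigma> v"
      using True d b orb_self unfolding origin_def by (intro exI[of _ a]) auto
    then have "crossing \<sigma> ({a, b}, False) k \<or> crossing \<sigma> k ({a, b}, False) \<longleftrightarrow>
        interlace \<sigma> {a, b} {c, d}"
      using interlace_commute[OF aH orb_self b(1) True d dist] cd(1)
      unfolding crossing_def by (auto simp: Un_commute)
    also have "\<dots> \<longleftrightarrow> (c \<in> ?A) \<noteq> (d \<in> ?A)"
      unfolding interlace_chord_iff[OF aH b(1) True d dist] using cd True d by auto
    also have "\<dots> \<longleftrightarrow> card ({c, d} \<inter> ?A) = 1"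
      using cd(4) by (cases "c \<in> ?A"; cases "d \<in> ?A") auto
    finally show ?thesis using cd(1) by simp
  next
    case False
    then have "d \<notin> orb \<sigma> a" using cd orb_eq_if_mem aH orb_self by metis
    then have "fst k \<inter> ?A = {}" using False cd(1) by auto
    moreover have "\<nexists>v. {a, b} \<union> {c, d} \<subseteq> origin \<sigma> v"
      using False mem_orb_if_common_orb[OF aH cd(2)] unfolding origin_def by blast
    ultimately show ?thesis using cd(1) unfolding crossing_def by (auto simp: Un_commute)
  qed
qed

text \<open>A chord of M crosses {a, b} iff exactly one of its ends lies strictly between a and b;
  chords with both ends there contribute 2 to the count of the darts in between.\<close>
lemma t_count_insert_chord:
  assumes R: "R \<subseteq> H" and a: "a \<in> R" and b: "b \<in> R" "b \<in> orb \<sigma> a" "b \<noteq> a"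
    and M: "M \<in> short_matchings (R - {a, b})"
  shows "(-1::real) ^ t_count \<sigma> (insert ({a, b}, False) M) =
    (-1) ^ t_count \<sigma> M * (-1) ^ card {c \<in> R \<inter> orb \<sigma> a - {a}. rot_pos \<sigma> a c < rot_pos \<sigma> a b}"
proof -
  let ?A = "{c \<in> R \<inter> orb \<sigma> a - {a}. rot_pos \<sigma> a c < rot_pos \<sigma> a b}"
  let ?k = "({a, b}, False) :: 'd set \<times> bool"
  let ?crosses = "\<lambda>k. crossing \<sigma> ?k k \<or> crossing \<sigma> k ?k"
  have finM: "finite M"
    using perfect_matching_subset[OF M] finite_short_edges finite_subset by blast
  have "?k \<notin> M" using perfect_matching_block_subset[OF M, of ?k] by auto
  then have t: "t_count \<sigma> (insert ?k M) = t_count \<sigma> M + card {k \<in> M. ?crosses k}"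
    unfolding t_count_eq_card_crossing_pairs using card_related_pairs_insert[OF finM] by blast
  have "card ?A = (\<Sum>k\<in>M. card (fst k \<inter> ?A))"
  proof (rule card_eq_sum_blocks[OF M finM])
    show "\<forall>k\<in>M. finite (fst k)" using M by (auto elim: short_matching_edgeE)
  qed (use b in auto)
  then have "(-1::real) ^ card ?A = (\<Prod>k\<in>M. (-1) ^ card (fst k \<inter> ?A))"
    by (simp add: power_sum)
  also have "\<dots> = (\<Prod>k\<in>M. (-1) ^ (if ?crosses k then 1 else 0))"
  proof (rule prod.cong[OF refl])
    fix k assume k: "k \<in> M"
    then obtain c d where "k = ({c, d}, False)" using M by (elim short_matching_edgeE)
    then have "card (fst k \<inter> ?A) \<le> card {c, d}" by (intro card_mono) auto
    also have "\<dots> \<le> 2" by (simp add: card_insert_if)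
    finally have "card (fst k \<inter> ?A) \<le> 2" .
    then show "(-1::real) ^ card (fst k \<inter> ?A) = (-1) ^ (if ?crosses k then 1 else 0)"
      using crossing_chord_iff[OF R a b(2,3) M k] by (auto simp: le_Suc_eq numeral_2_eq_2)
  qed
  also have "\<dots> = (-1) ^ (\<Sum>k\<in>M. if ?crosses k then 1 else 0)"
    by (rule power_sum[symmetric])
  also have "(\<Sum>k\<in>M. if ?crosses k then 1 else 0) = card {k \<in> M. ?crosses k}"
    using finM by (simp add: sum.If_cases Int_def conj_commute)
  finally show ?thesis unfolding t by (simp add: power_add)
qed


lemma sum_short_matchings_expand:
  assumes R: "R \<subseteq> H" and a: "a \<in> R"
  shows "(\<Sum>M\<in>short_matchings R. (-1::real) ^ t_count \<sigma> M) =
    (\<Sum>b\<in>R \<inter> orb \<sigma> a - {a}. (-1) ^ card {c \<in> R \<inter> orb \<sigma> a - {a}. rot_pos \<sigma> a c < rot_pos \<sigma> a b}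
       * (\<Sum>M\<in>short_matchings (R - {a, b}). (-1) ^ t_count \<sigma> M))"
proof -
  let ?B = "R \<inter> orb \<sigma> a - {a}"
  let ?f = "\<lambda>M. (-1::real) ^ t_count \<sigma> M"
  have "(\<Sum>M\<in>short_matchings R. ?f M) =
      (\<Sum>k\<in>{k \<in> short_edges. a \<in> fst k \<and> fst k \<subseteq> R}. \<Sum>M\<in>short_matchings (R - fst k). ?f (insert k M))"
    by (rule sum_perfect_matchings_split[OF finite_short_edges short_edge_blocks_nonempty a])
  also have "\<dots> = (\<Sum>b\<in>?B. \<Sum>M\<in>short_matchings (R - {a, b}). ?f (insert ({a, b}, False) M))"
    unfolding short_edges_at[OF R a] by (subst sum.reindex) (auto simp: inj_on_def doubleton_eq_iff)
  also have "\<dots> = (\<Sum>b\<in>?B. (-1) ^ card {c \<in> ?B. rot_pos \<sigma> a c < rot_pos \<sigma> a b}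
       * (\<Sum>M\<in>short_matchings (R - {a, b}). ?f M))"
  proof (rule sum.cong[OF refl])
    fix b assume b: "b \<in> ?B"
    then show "(\<Sum>M\<in>short_matchings (R - {a, b}). ?f (insert ({a, b}, False) M)) =
      (-1) ^ card {c \<in> ?B. rot_pos \<sigma> a c < rot_pos \<sigma> a b} * (\<Sum>M\<in>short_matchings (R - {a, b}). ?f M)"
      using t_count_insert_chord[OF R a] by (simp add: sum_distrib_right mult.commute)
  qed
  finally show ?thesis .
qed

lemma odd_card_other_darts:
  assumes R: "R \<subseteq> H" and a: "a \<in> R" and "even_at_vertices R"
  shows "odd (card (R \<inter> orb \<sigma> a - {a}))"
proof -
  have "orb \<sigma> a \<in> map_verts H \<sigma>" using R a unfolding map_verts_def origin_def by blast
  then have "even (card (R \<inter> orb \<sigma> a))" using assms(3) unfolding even_at_vertices_def by blast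
  moreover have "finite R" using R finite_darts finite_subset by blast
  then have "card (R \<inter> orb \<sigma> a) = Suc (card (R \<inter> orb \<sigma> a - {a}))"
    using card_Suc_Diff1[of "R \<inter> orb \<sigma> a" a] a orb_self[of a \<sigma>] by simp
  ultimately show ?thesis by simp
qed

theorem sum_short_matchings:
  assumes "R \<subseteq> H"
  shows "(\<Sum>M\<in>short_matchings R. (-1::real) ^ t_count \<sigma> M) = (if even_at_vertices R then 1 else 0)"
  using assms
proof (induction "card R" arbitrary: R rule: less_induct)
  case less
  show ?case
  proof (cases "R = {}")
    case True
    then show ?thesis
      by (simp add: perfect_matchings_empty[OF short_edge_blocks_nonempty]
          t_count_eq_card_crossing_pairs related_pairs_def even_at_vertices_def)
  next
    case False
    then obtain a where a: "a \<in> R" by blast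
    let ?B = "R \<inter> orb \<sigma> a - {a}"
    let ?ev = "if even_at_vertices R then 1 else 0 :: real"
    have aH: "a \<in> H" using a less.prems by blast
    have finR: "finite R" using less.prems finite_darts finite_subset by blast
    have IH: "(\<Sum>M\<in>short_matchings (R - {a, b}). (-1::real) ^ t_count \<sigma> M) = ?ev" if b: "b \<in> ?B" for b
    proof -
      have "card (R - {a, b}) < card R" using finR a b by (intro psubset_card_mono) auto
      moreover have "R - {a, b} \<subseteq> H" using less.prems by blast
      ultimately show ?thesis
        using less.hyps[of "R - {a, b}"] even_at_vertices_remove_chord[OF less.prems a] b by auto
    qed
    have "(\<Sum>M\<in>short_matchings R. (-1::real) ^ t_count \<sigma> M)
        = (\<Sum>b\<in>?B. (-1) ^ card {c \<in> ?B. rot_pos \<sigma> a c < rot_pos \<sigma> a b}) * ?ev"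
      unfolding sum_short_matchings_expand[OF less.prems a] sum_distrib_right using IH by simp
    also have "(\<Sum>b\<in>?B. (-1::real) ^ card {c \<in> ?B. rot_pos \<sigma> a c < rot_pos \<sigma> a b})
        = (if odd (card ?B) then 1 else 0)"
      using finR inj_on_subset[OF inj_on_rot_pos[OF aH], of ?B] by (intro sum_alternating_rank_inj_on) auto
    also have "(if odd (card ?B) then 1 else 0) * ?ev = ?ev"
      using odd_card_other_darts[OF less.prems a] by simp
    finally show ?thesis .
  qed
qed

end

section \<open>Matchings of the terminal graph\<close>

definition long_edges :: "'d set set \<Rightarrow> ('d set \<times> bool) set" where
  "long_edges L = (\<lambda>e. (e, True)) ` L"

lemma mem_long_edges_iff: "k \<in> long_edges L \<longleftrightarrow> fst k \<in> L \<and> snd k"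
  unfolding long_edges_def by (cases k) auto

locale rotation_with_reversal = rotation H \<sigma> for H :: "'d set" and \<sigma> +
  fixes \<alpha> :: "'d \<Rightarrow> 'd"
  assumes reversal: "\<forall>d\<in>H. \<alpha> d \<in> H \<and> \<alpha> (\<alpha> d) = d \<and> \<alpha> d \<noteq> d"
begin

abbreviation edges :: "'d set set" where
  "edges \<equiv> map_edges H \<alpha>"

definition uncovered_darts :: "'d set set \<Rightarrow> 'd set" where
  "uncovered_darts L = {d \<in> H. edge_of \<alpha> d \<notin> L}"

lemma edge_of_in_edges: "d \<in> H \<Longrightarrow> edge_of \<alpha> d \<in> edges"
  unfolding map_edges_def by blast

lemma edge_eq_edge_of: "e \<in> edges \<Longrightarrow> d \<in> e \<Longrightarrow> e = edge_of \<alpha> d"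
  using reversal unfolding map_edges_def edge_of_def by auto

lemma edge_subset_darts: "e \<in> edges \<Longrightarrow> e \<subseteq> H"
  using reversal unfolding map_edges_def edge_of_def by auto

lemma card_edge: "e \<in> edges \<Longrightarrow> card e = 2"
  using reversal unfolding map_edges_def edge_of_def by auto

lemma finite_edges: "finite edges"
  unfolding map_edges_def using finite_darts by simp

lemma long_edge_at:
  assumes "L \<subseteq> edges" "k \<in> long_edges L" "d \<in> fst k"
  shows "k = (edge_of \<alpha> d, True) \<and> edge_of \<alpha> d \<in> L"
  using assms edge_eq_edge_of unfolding long_edges_def by auto

lemma K_matchings_eq_perfect_matchings:
  "K_matchings H \<alpha> \<sigma> = perfect_matchings fst (long_edges edges \<union> short_edges) H"
proof -
  have K: "K_edges H \<alpha> \<sigma> = long_edges edges \<union> short_edges"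
    unfolding K_edges_def long_edges_def short_edges_def map_edges_def by auto
  have "fst k \<subseteq> H" if "k \<in> K_edges H \<alpha> \<sigma>" for k
    using that reversal unfolding K_edges_def edge_of_def by auto
  then show ?thesis
    unfolding K_matchings_def perfect_matchings_def K[symmetric] by blast
qed

lemma long_union_short_matching:
  assumes L: "L \<subseteq> edges" and M: "M \<in> short_matchings (uncovered_darts L)"
  shows "long_edges L \<union> M \<in> K_matchings H \<alpha> \<sigma>"
  unfolding K_matchings_eq_perfect_matchings
proof (rule perfect_matchingI)
  have M_sub: "fst k \<subseteq> uncovered_darts L" if "k \<in> M" for k
    using perfect_matching_block_subset[OF M that] .
  show "long_edges L \<union> M \<subseteq> long_edges edges \<union> short_edges"
    using L perfect_matching_subset[OF M] unfolding long_edges_def by blast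
  note long = long_edge_at[OF L]
  show "fst k \<subseteq> H" if k: "k \<in> long_edges L \<union> M" for k
  proof (cases "k \<in> M")
    case True
    then show ?thesis using M_sub unfolding uncovered_darts_def by blast
  next
    case False
    then have "fst k \<in> L" using k by (simp add: mem_long_edges_iff)
    then show ?thesis using L edge_subset_darts by blast
  qed
  show "\<exists>k\<in>long_edges L \<union> M. d \<in> fst k" if d: "d \<in> H" for d
  proof (cases "edge_of \<alpha> d \<in> L")
    case True
    then have "(edge_of \<alpha> d, True) \<in> long_edges L" unfolding long_edges_def by blast
    moreover have "d \<in> edge_of \<alpha> d" unfolding edge_of_def by simp
    ultimately show ?thesis by (metis UnI1 fst_conv)
  next
    case False
    then have "d \<in> uncovered_darts L" using d unfolding uncovered_darts_def by blast
    then show ?thesis using perfect_matching_covers[OF M] by blast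
  qed
  show "k1 = k2" if k: "k1 \<in> long_edges L \<union> M" "k2 \<in> long_edges L \<union> M"
    and d: "d \<in> fst k1" "d \<in> fst k2" for k1 k2 d
  proof (cases "edge_of \<alpha> d \<in> L")
    case True
    then have "k1 \<notin> M" "k2 \<notin> M" using d M_sub unfolding uncovered_darts_def by blast+
    then show ?thesis using k d long by (metis Un_iff)
  next
    case False
    then have "k1 \<in> M" "k2 \<in> M" using k d long by blast+
    then show ?thesis using d perfect_matching_unique[OF M] by blast
  qed
qed

lemma K_matching_split:
  assumes D: "D \<in> K_matchings H \<alpha> \<sigma>"
  defines "L \<equiv> {e. (e, True) \<in> D}" and "M \<equiv> {k \<in> D. \<not> snd k}"
  shows "L \<subseteq> edges" "M \<in> short_matchings (uncovered_darts L)" "D = long_edges L \<union> M"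
proof -
  note D' = D[unfolded K_matchings_eq_perfect_matchings]
  have D_sub: "k \<in> long_edges edges \<or> k \<in> short_edges \<and> \<not> snd k" if "k \<in> D" for k
    using perfect_matching_subset[OF D'] that snd_short_edge by blast
  show "L \<subseteq> edges" using D_sub unfolding L_def mem_long_edges_iff by fastforce
  show "D = long_edges L \<union> M" unfolding L_def M_def by (auto simp: mem_long_edges_iff)
  have long_at: "(edge_of \<alpha> d, True) \<in> D" if "edge_of \<alpha> d \<in> L" for d
    using that unfolding L_def by blast
  show "M \<in> short_matchings (uncovered_darts L)"
  proof (rule perfect_matchingI)
    show "M \<subseteq> short_edges" using D_sub unfolding M_def mem_long_edges_iff by blast
    show "fst k \<subseteq> uncovered_darts L" if k: "k \<in> M" for k
    proof
      fix d assume d: "d \<in> fst k"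
      have "k \<in> D" "\<not> snd k" using k unfolding M_def by auto
      have "d \<in> H" using d \<open>k \<in> D\<close> perfect_matching_block_subset[OF D'] by blast
      moreover have "edge_of \<alpha> d \<notin> L"
      proof
        assume "edge_of \<alpha> d \<in> L"
        moreover have "d \<in> fst (edge_of \<alpha> d, True)" unfolding edge_of_def by simp
        ultimately have "k = (edge_of \<alpha> d, True)"
          using long_at \<open>k \<in> D\<close> d perfect_matching_unique[OF D'] by blast
        then show False using \<open>\<not> snd k\<close> by simp
      qed
      ultimately show "d \<in> uncovered_darts L" unfolding uncovered_darts_def by blast
    qed
    show "\<exists>k\<in>M. d \<in> fst k" if d: "d \<in> uncovered_darts L" for d
    proof -
      obtain k where k: "k \<in> D" "d \<in> fst k"
        using d perfect_matching_covers[OF D'] unfolding uncovered_darts_def by blast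
      have "\<not> snd k"
      proof
        assume "snd k"
        then have "k \<in> long_edges L" using k(1) unfolding L_def mem_long_edges_iff
          by (metis (full_types) mem_Collect_eq prod.collapse)
        then show False using long_edge_at[OF \<open>L \<subseteq> edges\<close> _ k(2)] d unfolding uncovered_darts_def by blast
      qed
      then show ?thesis using k unfolding M_def by blast
    qed
    show "k1 = k2" if "k1 \<in> M" "k2 \<in> M" "d \<in> fst k1" "d \<in> fst k2" for k1 k2 d
      using that perfect_matching_unique[OF D'] unfolding M_def by blast
  qed
qed

lemma K_matchings_eq_image:
  "K_matchings H \<alpha> \<sigma> =
    (\<lambda>(L, M). long_edges L \<union> M) ` (SIGMA L:Pow edges. short_matchings (uncovered_darts L))"
proof (intro equalityI subsetI)
  fix D assume D: "D \<in> K_matchings H \<alpha> \<sigma>"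
  let ?L = "{e. (e, True) \<in> D}" and ?M = "{k \<in> D. \<not> snd k}"
  show "D \<in> (\<lambda>(L, M). long_edges L \<union> M) ` (SIGMA L:Pow edges. short_matchings (uncovered_darts L))"
    using K_matching_split[OF D] by (intro image_eqI[of _ _ "(?L, ?M)"]) auto
qed (auto intro: long_union_short_matching)

lemma inj_on_long_union:
  "inj_on (\<lambda>(L, M). long_edges L \<union> M) (SIGMA L:Pow edges. short_matchings (uncovered_darts L))"
proof (rule inj_onI, clarify)
  fix L M L' M'
  assume M: "M \<in> short_matchings (uncovered_darts L)" and M': "M' \<in> short_matchings (uncovered_darts L')"
    and eq: "long_edges L \<union> M = long_edges L' \<union> M'"
  have "e \<in> L \<longleftrightarrow> (e, True) \<in> long_edges L \<union> M" for e
    using long_edge_notin_short_matching[OF M] by (auto simp: mem_long_edges_iff)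
  moreover have "e \<in> L' \<longleftrightarrow> (e, True) \<in> long_edges L' \<union> M'" for e
    using long_edge_notin_short_matching[OF M'] by (auto simp: mem_long_edges_iff)
  ultimately have "L = L'" using eq by blast
  moreover have "M = M'"
  proof -
    have "M = {k \<in> long_edges L \<union> M. \<not> snd k}"
      using short_matching_not_long[OF M] by (auto simp: mem_long_edges_iff)
    also have "\<dots> = {k \<in> long_edges L' \<union> M'. \<not> snd k}" by (simp only: eq)
    also have "\<dots> = M'"
      using short_matching_not_long[OF M'] by (auto simp: mem_long_edges_iff)
    finally show ?thesis .
  qed
  ultimately show "L = L' \<and> M = M'" by simp
qed

lemma t_count_long_union: "t_count \<sigma> (long_edges L \<union> M) = t_count \<sigma> M"
proof -
  have "\<not> crossing \<sigma> k k' \<and> \<not> crossing \<sigma> k' k" if "k \<in> long_edges L" for k k'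
    using that unfolding crossing_def by (simp add: mem_long_edges_iff)
  then have "related_pairs (crossing \<sigma>) (long_edges L \<union> M) = related_pairs (crossing \<sigma>) M"
    by (intro related_pairs_Un_unrelated) blast
  then show ?thesis by (simp add: t_count_eq_card_crossing_pairs)
qed

lemma kappa_dot_D_long_union:
  assumes "M \<in> short_matchings R"
  shows "kappa_dot_D \<kappa> (long_edges L \<union> M) = card (L \<inter> \<kappa>)"
proof -
  have "{k \<in> long_edges L \<union> M. snd k \<and> dual_edge (fst k) \<in> \<kappa>} = long_edges (L \<inter> \<kappa>)"
    using short_matching_not_long[OF assms] by (auto simp: mem_long_edges_iff dual_edge_def)
  then show ?thesis unfolding kappa_dot_D_def long_edges_def by (simp add: card_image inj_on_def)
qed

lemma prod_K_weight_long_union: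
  assumes L: "L \<subseteq> edges" and M: "M \<in> short_matchings (uncovered_darts L)"
  shows "(\<Prod>k\<in>long_edges L \<union> M. K_weight \<alpha> x k) = (\<Prod>d\<in>uncovered_darts L. sqrt (x (edge_of \<alpha> d)))"
proof -
  have finM: "finite M" using perfect_matching_subset[OF M] finite_short_edges finite_subset by blast
  have finL: "finite (long_edges L)"
    unfolding long_edges_def using finite_edges L finite_subset by blast
  have "long_edges L \<inter> M = {}" using long_edge_notin_short_matching[OF M] by (auto simp: long_edges_def)
  then have "(\<Prod>k\<in>long_edges L \<union> M. K_weight \<alpha> x k)
      = (\<Prod>k\<in>long_edges L. K_weight \<alpha> x k) * (\<Prod>k\<in>M. K_weight \<alpha> x k)"
    by (rule prod.union_disjoint[OF finL finM])
  also have "(\<Prod>k\<in>long_edges L. K_weight \<alpha> x k) = 1"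
    by (rule prod.neutral) (simp add: mem_long_edges_iff K_weight_def)
  also have "(\<Prod>k\<in>M. K_weight \<alpha> x k) = (\<Prod>k\<in>M. \<Prod>d\<in>fst k. sqrt (x (edge_of \<alpha> d)))"
    using short_matching_not_long[OF M] unfolding K_weight_def by (simp add: real_sqrt_prod)
  also have "\<dots> = (\<Prod>d\<in>(\<Union>k\<in>M. fst k). sqrt (x (edge_of \<alpha> d)))"
    using finM perfect_matching_disjoint[OF M] M
    by (intro prod.UNION_disjoint[symmetric]) (auto elim: short_matching_edgeE)
  finally show ?thesis unfolding UN_perfect_matching[OF M] by simp
qed

lemma sum_K_matchings:
  "(\<Sum>D\<in>K_matchings H \<alpha> \<sigma>. (-1::real) ^ t_count \<sigma> D * (-1) ^ kappa_dot_D \<kappa> D * (\<Prod>k\<in>D. K_weight \<alpha> x k))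
   = (\<Sum>L\<in>Pow edges. (-1) ^ card (L \<inter> \<kappa>) * (\<Prod>d\<in>uncovered_darts L. sqrt (x (edge_of \<alpha> d)))
        * (if even_at_vertices (uncovered_darts L) then 1 else 0))"
proof -
  let ?f = "\<lambda>D. (-1::real) ^ t_count \<sigma> D * (-1) ^ kappa_dot_D \<kappa> D * (\<Prod>k\<in>D. K_weight \<alpha> x k)"
  let ?c = "\<lambda>L. (-1::real) ^ card (L \<inter> \<kappa>) * (\<Prod>d\<in>uncovered_darts L. sqrt (x (edge_of \<alpha> d)))"
  have "(\<Sum>D\<in>K_matchings H \<alpha> \<sigma>. ?f D)
      = (\<Sum>L\<in>Pow edges. \<Sum>M\<in>short_matchings (uncovered_darts L). ?f (long_edges L \<union> M))"
    unfolding K_matchings_eq_image sum.reindex[OF inj_on_long_union]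
    using finite_edges finite_perfect_matchings[OF finite_short_edges]
    by (subst sum.Sigma) (auto simp: split_def)
  also have "\<dots> = (\<Sum>L\<in>Pow edges. ?c L * (\<Sum>M\<in>short_matchings (uncovered_darts L). (-1) ^ t_count \<sigma> M))"
    unfolding sum_distrib_left
    by (intro sum.cong refl) (simp add: t_count_long_union kappa_dot_D_long_union prod_K_weight_long_union)
  also have "\<dots> = (\<Sum>L\<in>Pow edges. ?c L * (if even_at_vertices (uncovered_darts L) then 1 else 0))"
    by (intro sum.cong refl) (simp add: sum_short_matchings uncovered_darts_def)
  finally show ?thesis .
qed


definition darts_of :: "'d set set \<Rightarrow> 'd set" where
  "darts_of P = {d \<in> H. edge_of \<alpha> d \<in> P}"

lemma uncovered_darts_Diff: "P \<subseteq> edges \<Longrightarrow> uncovered_darts (edges - P) = darts_of P"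
  unfolding uncovered_darts_def darts_of_def using edge_of_in_edges by blast

lemma prod_sqrt_darts_of:
  assumes P: "P \<subseteq> edges" and x: "\<forall>e\<in>edges. 0 \<le> x e"
  shows "(\<Prod>d\<in>darts_of P. sqrt (x (edge_of \<alpha> d))) = (\<Prod>e\<in>P. x e)"
proof -
  have finP: "finite P" using finite_edges P finite_subset by blast
  have "(\<Prod>d\<in>darts_of P. sqrt (x (edge_of \<alpha> d)))
      = (\<Prod>e\<in>P. \<Prod>d\<in>{d \<in> darts_of P. edge_of \<alpha> d = e}. sqrt (x (edge_of \<alpha> d)))"
    by (rule prod.group[symmetric]) (use finite_darts finP in \<open>auto simp: darts_of_def\<close>)
  also have "\<dots> = (\<Prod>e\<in>P. x e)"
  proof (rule prod.cong[OF refl])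
    fix e assume "e \<in> P"
    then have e: "e \<in> edges" using P by blast
    have "{d \<in> darts_of P. edge_of \<alpha> d = e} = e"
      using edge_eq_edge_of[OF e] edge_subset_darts[OF e] \<open>e \<in> P\<close>
      unfolding darts_of_def edge_of_def by auto
    then have "(\<Prod>d\<in>{d \<in> darts_of P. edge_of \<alpha> d = e}. sqrt (x (edge_of \<alpha> d))) = (\<Prod>d\<in>e. sqrt (x e))"
      using edge_eq_edge_of[OF e] by (metis (mono_tags, lifting) prod.cong)
    also have "\<dots> = x e" using card_edge[OF e] x e by simp
    finally show "(\<Prod>d\<in>{d \<in> darts_of P. edge_of \<alpha> d = e}. sqrt (x (edge_of \<alpha> d))) = x e" .
  qed
  finally show ?thesis .
qed

lemma even_at_vertices_darts_of:
  "even_at_vertices (darts_of P) \<longleftrightarrow> (\<forall>v\<in>map_verts H \<sigma>. even (card {d \<in> v. edge_of \<alpha> d \<in> P}))"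
proof -
  have "darts_of P \<inter> v = {d \<in> v. edge_of \<alpha> d \<in> P}" if "v \<in> map_verts H \<sigma>" for v
    using that orb_subset unfolding darts_of_def map_verts_def origin_def by blast
  then show ?thesis unfolding even_at_vertices_def by simp
qed

lemma sum_even_subgraphs_eq_sum_K_matchings:
  assumes \<kappa>: "\<kappa> \<subseteq> edges" and x: "\<forall>e\<in>edges. 0 \<le> x e"
  shows "(\<Sum>P\<in>even_subgraphs H \<alpha> \<sigma>. (-1) ^ card (P \<inter> \<kappa>) * (\<Prod>e\<in>P. x e))
       = (-1) ^ card \<kappa> * (\<Sum>D\<in>K_matchings H \<alpha> \<sigma>.
            (-1) ^ t_count \<sigma> D * (-1) ^ kappa_dot_D \<kappa> D * (\<Prod>k\<in>D. K_weight \<alpha> x k))"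
proof -
  let ?even = "\<lambda>P. \<forall>v\<in>map_verts H \<sigma>. even (card {d \<in> v. edge_of \<alpha> d \<in> P})"
  let ?g = "\<lambda>L. (-1::real) ^ card (L \<inter> \<kappa>) * (\<Prod>d\<in>uncovered_darts L. sqrt (x (edge_of \<alpha> d)))
        * (if even_at_vertices (uncovered_darts L) then 1 else 0)"
  have fin\<kappa>: "finite \<kappa>" using finite_edges \<kappa> finite_subset by blast
  have complement: "(-1) ^ card \<kappa> * ?g (edges - P)
      = (if ?even P then (-1) ^ card (P \<inter> \<kappa>) * (\<Prod>e\<in>P. x e) else 0)"
    if P: "P \<subseteq> edges" for P
  proof -
    have "(edges - P) \<inter> \<kappa> = \<kappa> - P" using \<kappa> by blast
    then have "(-1::real) ^ card \<kappa> * (-1) ^ card ((edges - P) \<inter> \<kappa>) = (-1) ^ card (P \<inter> \<kappa>)"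
      using minus_one_power_card_Diff[OF fin\<kappa>, of P] by (simp add: Int_commute)
    then show ?thesis
      unfolding uncovered_darts_Diff[OF P] prod_sqrt_darts_of[OF P x] even_at_vertices_darts_of
      by (simp add: mult.assoc[symmetric])
  qed
  have "bij_betw (\<lambda>P. edges - P) (Pow edges) (Pow edges)"
    by (rule bij_betw_byWitness[where f' = "\<lambda>P. edges - P"]) auto
  then have "(-1) ^ card \<kappa> * (\<Sum>L\<in>Pow edges. ?g L) = (\<Sum>P\<in>Pow edges. (-1) ^ card \<kappa> * ?g (edges - P))"
    unfolding sum_distrib_left by (rule sum.reindex_bij_betw[symmetric])
  also have "\<dots> = (\<Sum>P\<in>Pow edges. if ?even P then (-1) ^ card (P \<inter> \<kappa>) * (\<Prod>e\<in>P. x e) else 0)"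
    using complement by (intro sum.cong) auto
  also have "\<dots> = (\<Sum>P\<in>{P \<in> Pow edges. ?even P}. (-1) ^ card (P \<inter> \<kappa>) * (\<Prod>e\<in>P. x e))"
    by (rule sum.inter_filter[symmetric]) (use finite_edges in simp)
  also have "{P \<in> Pow edges. ?even P} = even_subgraphs H \<alpha> \<sigma>"
    unfolding even_subgraphs_def by blast
  finally show ?thesis unfolding sum_K_matchings by simp
qed

end

theorem lemma2p3:
  fixes H :: "'d set" and \<alpha> \<sigma> :: "'d \<Rightarrow> 'd"
    and x :: "'d set \<Rightarrow> real" and \<kappa> :: "'d set set"
  assumes "planar_map H \<alpha> \<sigma>"
    and "\<forall>e\<in>map_edges H \<alpha>. 0 \<le> x e"
    and "\<kappa> \<subseteq> dual_edges H \<alpha> \<sigma>"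
  shows "(\<Sum>P\<in>even_subgraphs H \<alpha> \<sigma>. (-1) ^ kappa_dot_P \<kappa> P * (\<Prod>e\<in>P. x e))
       = (-1) ^ card \<kappa> * (\<Sum>D\<in>K_matchings H \<alpha> \<sigma>.
            (-1) ^ t_count \<sigma> D * (-1) ^ kappa_dot_D \<kappa> D * (\<Prod>k\<in>D. K_weight \<alpha> x k))"
proof -
  interpret rotation_with_reversal H \<sigma> \<alpha>
    using assms(1) unfolding planar_map_def comb_map_def by unfold_locales auto
  have "kappa_dot_P \<kappa> P = card (P \<inter> \<kappa>)" for P
    unfolding kappa_dot_P_def dual_edge_def by (simp add: Int_def)
  then show ?thesis
    using sum_even_subgraphs_eq_sum_K_matchings assms(2,3) unfolding dual_edges_def by simp
qed

end
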